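(* Let $\Omega\subset\mathbb{R}^{+}$ be measurable and $\nu\ge0$. Then $\Omega$ is $\mu_\nu$-thick if and only if $\Omega$ is thick.
   Context: Let $d\mu_\nu(y)=y^{2\nu+1}dy$ on $\mathbb{R}^{+}$. A measurable $\Omega\subset\mathbb{R}^{+}$ is $\mu_\nu$-thick if there exist $r>0$, $L>0$ with $\mu_\nu(\Omega\cap[x,x+L])\ge r\,\mu_\nu([x,x+L])$ for all $x\ge0$. It is thick if there exist $\gamma>0$, $L>0$ with $|\Omega\cap[x,x+L]|\ge\gamma L$ for all $x\ge0$ ($|\cdot|$ = Lebesgue measure). *)

theory Defs
  imports "HOL-Analysis.Analysis"
begin

(* d mu_nu(y) = y^(2 nu + 1) dy on R^+ = [0, infinity) *)
definition mu_nu :: "real \<Rightarrow> real set \<Rightarrow> ennreal" where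
  "mu_nu \<nu> A = (\<integral>\<^sup>+ y. ennreal (indicator ({0..} \<inter> A) y * y powr (2 * \<nu> + 1)) \<partial>lebesgue)"

definition mu_thick :: "real \<Rightarrow> real set \<Rightarrow> bool" where
  "mu_thick \<nu> \<Omega> \<longleftrightarrow> (\<exists>r>0. \<exists>L>0. \<forall>x\<ge>0.
      mu_nu \<nu> (\<Omega> \<inter> {x..x+L}) \<ge> ennreal r * mu_nu \<nu> {x..x+L})"

definition thick :: "real set \<Rightarrow> bool" where
  "thick \<Omega> \<longleftrightarrow> (\<exists>\<gamma>>0. \<exists>L>0. \<forall>x\<ge>0.
      emeasure lebesgue (\<Omega> \<inter> {x..x+L}) \<ge> ennreal (\<gamma> * L))"

end

theory Submission imports Defs begin

(* The density y^p, p = 2 nu + 1, is nondecreasing on [0, infinity), so on a set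
   S \<subseteq> [a, b] with a \<ge> 0 the measure mu_nu is squeezed between a^p |S| and b^p |S|.
   If S \<subseteq> [x, x + L] has Lebesgue measure at least c L (c \<le> 1), at least c L / 2 of it lies
   beyond x + c L / 2 \<ge> c (x + L) / 2, so mu_nu(S) \<ge> (c (x + L) / 2)^p c L / 2. This is the
   fraction (c / 2)^(p + 1) of the bound (x + L)^p L \<ge> mu_nu([x, x + L]), and for S = [x, x + L],
   c = 1 it shows that this bound is also sharp up to the factor 2^(p + 1). Hence each notion
   of thickness implies the other, with the same L and modified constants. *)

lemma mu_nu_mono: "A \<subseteq> B \<Longrightarrow> mu_nu \<nu> A \<le> mu_nu \<nu> B"
  unfolding mu_nu_def
  by (rule nn_integral_mono) (auto simp: indicator_def intro!: ennreal_leI)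

lemma mu_nu_ge_emeasure:
  assumes S: "S \<in> sets lebesgue" "S \<subseteq> {a..}" and a: "0 \<le> a" and p: "0 \<le> 2*\<nu>+1"
  shows "ennreal (a powr (2*\<nu>+1)) * emeasure lebesgue S \<le> mu_nu \<nu> S"
proof -
  have "ennreal (a powr (2*\<nu>+1)) * emeasure lebesgue S =
      (\<integral>\<^sup>+ y. ennreal (a powr (2*\<nu>+1)) * indicator S y \<partial>lebesgue)"
    using S by (simp add: nn_integral_cmult_indicator)
  also have "\<dots> \<le> mu_nu \<nu> S"
    unfolding mu_nu_def
  proof (rule nn_integral_mono)
    fix y
    show "ennreal (a powr (2*\<nu>+1)) * indicator S y
        \<le> ennreal (indicator ({0..} \<inter> S) y * y powr (2*\<nu>+1))"
    proof (cases "y \<in> S")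
      case True
      then have "a \<le> y" using S by auto
      then have "a powr (2*\<nu>+1) \<le> y powr (2*\<nu>+1)" using a p by (intro powr_mono2) auto
      then show ?thesis using True \<open>a \<le> y\<close> a by (simp add: indicator_def)
    qed (simp add: indicator_def)
  qed
  finally show ?thesis .
qed

lemma mu_nu_le_emeasure:
  assumes S: "S \<in> sets lebesgue" "S \<subseteq> {..b}" and p: "0 \<le> 2*\<nu>+1"
  shows "mu_nu \<nu> S \<le> ennreal (b powr (2*\<nu>+1)) * emeasure lebesgue S"
proof -
  have "mu_nu \<nu> S \<le> (\<integral>\<^sup>+ y. ennreal (b powr (2*\<nu>+1)) * indicator S y \<partial>lebesgue)"
    unfolding mu_nu_def
  proof (rule nn_integral_mono)
    fix y
    show "ennreal (indicator ({0..} \<inter> S) y * y powr (2*\<nu>+1))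
        \<le> ennreal (b powr (2*\<nu>+1)) * indicator S y"
    proof (cases "y \<in> S \<and> 0 \<le> y")
      case True
      then have "y powr (2*\<nu>+1) \<le> b powr (2*\<nu>+1)" using S p by (intro powr_mono2) auto
      then show ?thesis using True by (simp add: indicator_def)
    qed (auto simp: indicator_def)
  qed
  also have "\<dots> = ennreal (b powr (2*\<nu>+1)) * emeasure lebesgue S"
    using S by (simp add: nn_integral_cmult_indicator)
  finally show ?thesis .
qed

lemma mu_nu_atLeastAtMost_le:
  assumes "0 \<le> L" "0 \<le> 2*\<nu>+1"
  shows "mu_nu \<nu> {x..x+L} \<le> ennreal ((x+L) powr (2*\<nu>+1) * L)"
proof -
  have "mu_nu \<nu> {x..x+L} \<le> ennreal ((x+L) powr (2*\<nu>+1)) * emeasure lebesgue {x..x+L}"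
    using assms(2) by (intro mu_nu_le_emeasure) auto
  also have "\<dots> = ennreal ((x+L) powr (2*\<nu>+1) * L)"
    using assms(1) by (simp add: ennreal_mult)
  finally show ?thesis .
qed

lemma emeasure_le_emeasure_Int_atLeast_add:
  assumes S: "S \<in> sets lebesgue" "S \<subseteq> {x..}" and t: "0 \<le> t"
  shows "emeasure lebesgue S \<le> ennreal t + emeasure lebesgue (S \<inter> {x+t..})"
proof -
  have "emeasure lebesgue S \<le> emeasure lebesgue (S \<inter> {x+t..} \<union> {x..x+t})"
    using S by (intro emeasure_mono sets.Un sets.Int) auto
  also have "\<dots> \<le> emeasure lebesgue (S \<inter> {x+t..}) + emeasure lebesgue {x..x+t}"
    using S by (intro emeasure_subadditive) auto
  also have "\<dots> = ennreal t + emeasure lebesgue (S \<inter> {x+t..})"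
    using t by (simp add: add.commute)
  finally show ?thesis .
qed

lemma mu_nu_ge_of_emeasure_ge:
  assumes S: "S \<in> sets lebesgue" "S \<subseteq> {x..x+L}" and x: "0 \<le> x" and L: "0 \<le> L"
    and c: "0 \<le> c" "c \<le> 1" and big: "ennreal (c*L) \<le> emeasure lebesgue S"
    and p: "0 \<le> 2*\<nu>+1"
  shows "ennreal ((c/2 * (x+L)) powr (2*\<nu>+1) * (c*L/2)) \<le> mu_nu \<nu> S"
proof -
  define a where "a = x + c*L/2"
  have "ennreal (c*L/2) + ennreal (c*L/2) = ennreal (c*L)"
    using c L by (simp add: ennreal_plus[symmetric])
  also have "\<dots> \<le> emeasure lebesgue S"
    by (fact big)
  also have "\<dots> \<le> ennreal (c*L/2) + emeasure lebesgue (S \<inter> {a..})"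
    unfolding a_def using S c L by (intro emeasure_le_emeasure_Int_atLeast_add) auto
  finally have upper_half: "ennreal (c*L/2) \<le> emeasure lebesgue (S \<inter> {a..})"
    by (simp add: ennreal_add_left_cancel_le)
  have "c/2 * (x+L) \<le> a"
    using mult_right_mono[OF c(2) x] x by (simp add: a_def algebra_simps)
  then have "(c/2 * (x+L)) powr (2*\<nu>+1) \<le> a powr (2*\<nu>+1)"
    using c x L p by (intro powr_mono2) auto
  then have "ennreal ((c/2 * (x+L)) powr (2*\<nu>+1) * (c*L/2))
      \<le> ennreal (a powr (2*\<nu>+1) * (c*L/2))"
    using c L by (intro ennreal_leI mult_right_mono) auto
  also have "\<dots> = ennreal (a powr (2*\<nu>+1)) * ennreal (c*L/2)"
    using c L by (intro ennreal_mult) auto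
  also have "\<dots> \<le> ennreal (a powr (2*\<nu>+1)) * emeasure lebesgue (S \<inter> {a..})"
    using upper_half by (rule mult_left_mono) simp
  also have "\<dots> \<le> mu_nu \<nu> (S \<inter> {a..})"
    using S x c L p by (intro mu_nu_ge_emeasure) (auto simp: a_def)
  also have "\<dots> \<le> mu_nu \<nu> S"
    by (rule mu_nu_mono) auto
  finally show ?thesis .
qed

lemma thick_if_mu_thick:
  assumes \<Omega>: "\<Omega> \<in> sets lebesgue" and p: "0 \<le> 2*\<nu>+1" and "mu_thick \<nu> \<Omega>"
  shows "thick \<Omega>"
proof -
  define p where "p = 2*\<nu>+1"
  obtain r L where r: "r > 0" and L: "L > 0" and thick_at:
    "\<And>x. x \<ge> 0 \<Longrightarrow> ennreal r * mu_nu \<nu> {x..x+L} \<le> mu_nu \<nu> (\<Omega> \<inter> {x..x+L})"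
    using \<open>mu_thick \<nu> \<Omega>\<close> unfolding mu_thick_def by blast
  have "ennreal (r * (1/2) powr p / 2 * L) \<le> emeasure lebesgue (\<Omega> \<inter> {x..x+L})" if x: "x \<ge> 0" for x
  proof -
    have "ennreal ((x+L) powr p) * ennreal (r * (1/2) powr p / 2 * L)
        = ennreal r * ennreal ((1/2 * (x+L)) powr p * (1*L/2))"
      using r L x powr_mult[of "1/2" "x+L" p] by (simp add: ennreal_mult[symmetric])
    also have "\<dots> \<le> ennreal r * mu_nu \<nu> {x..x+L}"
      unfolding p_def using x L p by (intro mult_left_mono mu_nu_ge_of_emeasure_ge) auto
    also have "\<dots> \<le> mu_nu \<nu> (\<Omega> \<inter> {x..x+L})"
      using x by (rule thick_at)
    also have "\<dots> \<le> ennreal ((x+L) powr p) * emeasure lebesgue (\<Omega> \<inter> {x..x+L})"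
      unfolding p_def using \<Omega> p by (intro mu_nu_le_emeasure) auto
    finally show ?thesis
      using x L by (subst (asm) ennreal_mult_le_mult_iff) auto
  qed
  then show ?thesis
    unfolding thick_def using r L by (intro exI[of _ "r * (1/2) powr p / 2"] exI[of _ L]) auto
qed

lemma mu_thick_if_thick:
  assumes \<Omega>: "\<Omega> \<in> sets lebesgue" and p: "0 \<le> 2*\<nu>+1" and "thick \<Omega>"
  shows "mu_thick \<nu> \<Omega>"
proof -
  define p where "p = 2*\<nu>+1"
  obtain \<gamma> L where \<gamma>: "\<gamma> > 0" and L: "L > 0" and thick_at:
    "\<And>x. x \<ge> 0 \<Longrightarrow> ennreal (\<gamma> * L) \<le> emeasure lebesgue (\<Omega> \<inter> {x..x+L})"
    using \<open>thick \<Omega>\<close> unfolding thick_def by blast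
  define c where "c = min \<gamma> 1"
  have c: "0 < c" "c \<le> 1" "c \<le> \<gamma>" using \<gamma> by (auto simp: c_def)
  have "ennreal ((c/2) powr p * (c/2)) * mu_nu \<nu> {x..x+L} \<le> mu_nu \<nu> (\<Omega> \<inter> {x..x+L})"
    if x: "x \<ge> 0" for x
  proof -
    have "ennreal ((c/2) powr p * (c/2)) * mu_nu \<nu> {x..x+L}
        \<le> ennreal ((c/2) powr p * (c/2)) * ennreal ((x+L) powr p * L)"
      unfolding p_def using L p by (intro mult_left_mono mu_nu_atLeastAtMost_le) auto
    also have "\<dots> = ennreal ((c/2 * (x+L)) powr p * (c*L/2))"
      using c L x powr_mult[of "c/2" "x+L" p] by (simp add: ennreal_mult[symmetric])
    also have "\<dots> \<le> mu_nu \<nu> (\<Omega> \<inter> {x..x+L})"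
    proof -
      have "ennreal (c*L) \<le> ennreal (\<gamma>*L)" using c L by (intro ennreal_leI) simp
      also have "\<dots> \<le> emeasure lebesgue (\<Omega> \<inter> {x..x+L})" using x by (rule thick_at)
      finally show ?thesis
        unfolding p_def using \<Omega> x L c p by (intro mu_nu_ge_of_emeasure_ge) auto
    qed
    finally show ?thesis .
  qed
  then show ?thesis
    unfolding mu_thick_def using c L by (intro exI[of _ "(c/2) powr p * (c/2)"] exI[of _ L]) auto
qed

theorem lemma3p7:
  fixes \<Omega> :: "real set" and \<nu> :: real
  assumes "\<Omega> \<subseteq> {0..}" and "\<Omega> \<in> sets lebesgue" and "\<nu> \<ge> 0"
  shows "mu_thick \<nu> \<Omega> \<longleftrightarrow> thick \<Omega>"
proof -
  have "0 \<le> 2*\<nu>+1" using \<open>\<nu> \<ge> 0\<close> by simp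
  then show ?thesis
    using thick_if_mu_thick mu_thick_if_thick \<open>\<Omega> \<in> sets lebesgue\<close> by blast
qed

end
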